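(* Let $M_J:\mathcal{S}^n\to\mathcal{X}^n$ be $(\varepsilon_J,\delta)$-jointly differentially private and let $M_D:\mathcal{X}^n\to O$ be $\varepsilon_D$-differentially private. Define $M:\mathcal{S}^n\to O$ by $M(\mathbf{s})=M_D(M_J(\mathbf{s}))$. Then $M$ is $(2\varepsilon_D+\varepsilon_J,\delta)$-differentially private.
   Context: A randomized $\mathcal{M}:\mathcal{S}^n\to\mathcal{O}^n$ is $(\varepsilon,\delta)$-jointly differentially private if for every $i\in[n]$, every $s_i,s_i'\in\mathcal{S}$, every $s_{-i}\in\mathcal{S}^{n-1}$ and every $B_{-i}\subseteq\mathcal{O}^{n-1}$: $\Pr[\mathcal{M}(s_i,s_{-i})_{-i}\in B_{-i}]\le e^{\varepsilon}\Pr[\mathcal{M}(s_i',s_{-i})_{-i}\in B_{-i}]+\delta$, where the subscript $-i$ denotes the outputs to all players other than $i$. A randomized $\mathcal{M}:\mathcal{D}^n\to\mathcal{O}$ is $(\varepsilon,\delta)$-differentially private if for every $i$, every $d_i,d_i'\in\mathcal{D}$, every $d_{-i}$ and every $B\subseteq\mathcal{O}$: $\Pr[\mathcal{M}(d_i,d_{-i})\in B]\le e^\varepsilon\Pr[\mathcal{M}(d_i',d_{-i})\in B]+\delta$; $\varepsilon$-differential privacy means $\delta=0$. *)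

theory Defs
  imports "HOL-Probability.Probability"
begin

text \<open>Players are indexed by a finite type 'i (playing the role of [n]).
The part of an output vector seen by the players other than i is its
restriction to UNIV - {i}, an element of the product space over UNIV - {i}.\<close>

definition jdp ::
  "'s set \<Rightarrow> 'x measure \<Rightarrow> real \<Rightarrow> real \<Rightarrow> (('i \<Rightarrow> 's) \<Rightarrow> ('i \<Rightarrow> 'x) measure) \<Rightarrow> bool" where
  "jdp S X eps delta M \<longleftrightarrow>
     (\<forall>i a b s. a \<in> S \<longrightarrow> b \<in> S \<longrightarrow> (\<forall>j. s j \<in> S) \<longrightarrow>
        (\<forall>B \<in> sets (PiM (UNIV - {i}) (\<lambda>_. X)).
           measure (M (s(i := a))) {x \<in> space (M (s(i := a))). restrict x (UNIV - {i}) \<in> B}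
             \<le> exp eps * measure (M (s(i := b))) {x \<in> space (M (s(i := b))). restrict x (UNIV - {i}) \<in> B}
               + delta))"

text \<open>(eps,delta)-differential privacy of M : D^n -> O, where the inputs
range over the set D of allowed data points; eps-DP is the case delta = 0.\<close>
definition dp ::
  "'d set \<Rightarrow> 'o measure \<Rightarrow> real \<Rightarrow> real \<Rightarrow> (('i \<Rightarrow> 'd) \<Rightarrow> 'o measure) \<Rightarrow> bool" where
  "dp D Out eps delta M \<longleftrightarrow>
     (\<forall>i a b d. a \<in> D \<longrightarrow> b \<in> D \<longrightarrow> (\<forall>j. d j \<in> D) \<longrightarrow>
        (\<forall>B \<in> sets Out.
           measure (M (d(i := a))) B \<le> exp eps * measure (M (d(i := b))) B + delta))"

end

theory Submission
  imports Defs
begin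

text \<open>Freeze i's coordinate of the
intermediate profile at a reference value c and put g x = min 1 (exp epsD * Pr[MD (x(i := c)) \<in> B]).
Since MD is epsD-differentially private, Pr[MD x \<in> B] \<le> g x \<le> exp (2 * epsD) * Pr[MD x \<in> B].
The function g only depends on the coordinates of x other than i and takes values in [0, 1], so by
the layer-cake formula its expectation is an integral over t \<in> [0, 1) of probabilities of events
{g > t} seen by the other players, each of which joint differential privacy of MJ controls. Hence
E[g] under MJ (s(i := a)) is at most exp epsJ times E[g] under MJ (s(i := b)) plus delta, and
chaining the three inequalities through the bind gives the claim.\<close>

lemma nn_integral_indicator_atLeastLessThan:
  fixes f :: "'a \<Rightarrow> real"
  assumes f[measurable]: "f \<in> borel_measurable M"
  shows "(\<integral>\<^sup>+x. indicator {0..<f x} t \<partial>M) = indicator {0..} t * emeasure M {x\<in>space M. t < f x}"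
proof (cases "0 \<le> t")
  case True
  then have "(\<integral>\<^sup>+x. indicator {0..<f x} t \<partial>M) = (\<integral>\<^sup>+x. indicator {x\<in>space M. t < f x} x \<partial>M)"
    by (intro nn_integral_cong) (auto split: split_indicator)
  with True show ?thesis by simp
qed (simp add: indicator_def)

lemma (in sigma_finite_measure) borel_measurable_emeasure_superlevel:
  fixes f :: "'a \<Rightarrow> real"
  assumes [measurable]: "f \<in> borel_measurable M"
  shows "(\<lambda>t. indicator {0..} t * emeasure M {x\<in>space M. t < f x}) \<in> borel_measurable borel"
proof -
  have "(\<lambda>(t, x). indicator {0..<f x} t :: ennreal) \<in> borel_measurable (borel \<Otimes>\<^sub>M M)"
    by (simp add: indicator_def case_prod_beta')
  from borel_measurable_nn_integral[OF this] show ?thesis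
    by (simp add: nn_integral_indicator_atLeastLessThan)
qed

lemma (in sigma_finite_measure) nn_integral_layer_cake:
  fixes f :: "'a \<Rightarrow> real"
  assumes f[measurable]: "f \<in> borel_measurable M"
    and nonneg: "\<And>x. x \<in> space M \<Longrightarrow> 0 \<le> f x"
  shows "(\<integral>\<^sup>+x. f x \<partial>M) = (\<integral>\<^sup>+t. indicator {0..} t * emeasure M {x\<in>space M. t < f x} \<partial>lborel)"
proof -
  interpret pair_sigma_finite M lborel
    by (simp add: lborel.sigma_finite_measure_axioms pair_sigma_finite.intro sigma_finite_measure_axioms)
  have "(\<lambda>(x, t). indicator {0..<f x} t :: ennreal) \<in> borel_measurable (M \<Otimes>\<^sub>M lborel)"
    by (simp add: indicator_def case_prod_beta')
  note Fubini = Fubini'[OF this]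
  have "(\<integral>\<^sup>+x. f x \<partial>M) = (\<integral>\<^sup>+x. (\<integral>\<^sup>+t. indicator {0..<f x} t \<partial>lborel) \<partial>M)"
    using nonneg by (intro nn_integral_cong) simp
  also have "\<dots> = (\<integral>\<^sup>+t. (\<integral>\<^sup>+x. indicator {0..<f x} t \<partial>M) \<partial>lborel)"
    using Fubini by simp
  finally show ?thesis
    by (simp add: nn_integral_indicator_atLeastLessThan)
qed

lemma nn_integral_le_of_superlevel_le:
  fixes f :: "'a \<Rightarrow> real" and c \<delta> :: ennreal
  assumes P: "sigma_finite_measure P" and Q: "sigma_finite_measure Q"
    and sets_eq: "sets P = sets Q"
    and f[measurable]: "f \<in> borel_measurable P"
    and f_01: "\<And>x. x \<in> space P \<Longrightarrow> 0 \<le> f x \<and> f x \<le> 1"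
    and superlevel_le:
      "\<And>t. emeasure P {x\<in>space P. t < f x} \<le> c * emeasure Q {x\<in>space Q. t < f x} + \<delta>"
  shows "(\<integral>\<^sup>+x. f x \<partial>P) \<le> c * (\<integral>\<^sup>+x. f x \<partial>Q) + \<delta>"
proof -
  have space_eq: "space Q = space P"
    using sets_eq by (metis sets_eq_imp_space_eq)
  have fQ[measurable]: "f \<in> borel_measurable Q"
    using f by (simp add: measurable_cong_sets[OF sets_eq refl])
  define SQ where "SQ = (\<lambda>t::real. indicator {0..} t * emeasure Q {x\<in>space Q. t < f x})"
  have SQ_meas: "SQ \<in> borel_measurable lborel"
    unfolding SQ_def using sigma_finite_measure.borel_measurable_emeasure_superlevel[OF Q fQ] by simp
  have "(\<integral>\<^sup>+x. f x \<partial>P) = (\<integral>\<^sup>+t. indicator {0..} t * emeasure P {x\<in>space P. t < f x} \<partial>lborel)"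
    using f_01 by (intro sigma_finite_measure.nn_integral_layer_cake[OF P f]) auto
  also have "\<dots> \<le> (\<integral>\<^sup>+t. c * SQ t + \<delta> * indicator {0..<1} t \<partial>lborel)"
  proof (intro nn_integral_mono)
    fix t :: real
    have "{x\<in>space P. t < f x} = {}" if "1 \<le> t"
      using that f_01 by fastforce
    then show "indicator {0..} t * emeasure P {x\<in>space P. t < f x} \<le> c * SQ t + \<delta> * indicator {0..<1} t"
      using superlevel_le[of t] unfolding SQ_def
      by (cases "0 \<le> t"; cases "t < 1") (auto simp del: Collect_empty_eq)
  qed
  also have "\<dots> = c * (\<integral>\<^sup>+t. SQ t \<partial>lborel) + \<delta>"
    using SQ_meas by (simp add: nn_integral_add nn_integral_cmult nn_integral_cmult_indicator)
  also have "(\<integral>\<^sup>+t. SQ t \<partial>lborel) = (\<integral>\<^sup>+x. f x \<partial>Q)"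
    unfolding SQ_def using f_01 space_eq
    by (intro sigma_finite_measure.nn_integral_layer_cake[OF Q fQ, symmetric]) auto
  finally show ?thesis .
qed

lemma prob_space_emeasure_eq_measure: "prob_space M \<Longrightarrow> emeasure M A = ennreal (measure M A)"
  by (simp add: finite_measure.emeasure_eq_measure prob_space.finite_measure)

lemma jdp_delta_nonneg:
  assumes "jdp S X eps delta M" and "a \<in> S"
  shows "0 \<le> delta"
  using assms(1)[unfolded jdp_def, rule_format, where a=a and b=a and s="\<lambda>_. a" and B="{}"] assms(2)
  by simp

lemma jdp_nn_integral_restrict_le:
  fixes M :: "('i \<Rightarrow> 's) \<Rightarrow> ('i \<Rightarrow> 'x) measure" and G :: "('i \<Rightarrow> 'x) \<Rightarrow> real"
    and i :: 'i and X :: "'x measure"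
  defines "R \<equiv> PiM (UNIV - {i}) (\<lambda>_. X)"
  assumes jdp: "jdp S X eps delta M"
    and S: "a \<in> S" "b \<in> S" "\<And>j. s j \<in> S"
    and Ma: "M (s(i := a)) \<in> space (prob_algebra (PiM UNIV (\<lambda>_. X)))"
    and Mb: "M (s(i := b)) \<in> space (prob_algebra (PiM UNIV (\<lambda>_. X)))"
    and G[measurable]: "G \<in> borel_measurable R"
    and G_01: "\<And>y. y \<in> space R \<Longrightarrow> 0 \<le> G y \<and> G y \<le> 1"
  shows "(\<integral>\<^sup>+x. G (restrict x (UNIV - {i})) \<partial>M (s(i := a)))
    \<le> exp eps * (\<integral>\<^sup>+x. G (restrict x (UNIV - {i})) \<partial>M (s(i := b))) + delta"
proof -
  define Pa Pb where "Pa = M (s(i := a))" and "Pb = M (s(i := b))"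
  have Pa: "prob_space Pa" "sets Pa = sets (PiM UNIV (\<lambda>_. X))"
    and Pb: "prob_space Pb" "sets Pb = sets (PiM UNIV (\<lambda>_. X))"
    using Ma Mb unfolding Pa_def Pb_def space_prob_algebra by auto
  have restrict_meas[measurable]: "(\<lambda>x. restrict x (UNIV - {i})) \<in> Pa \<rightarrow>\<^sub>M R"
    unfolding R_def measurable_cong_sets[OF Pa(2) refl] by (rule measurable_restrict_subset) simp
  have delta: "0 \<le> delta"
    using jdp S(1) by (rule jdp_delta_nonneg)
  show ?thesis
    unfolding Pa_def[symmetric] Pb_def[symmetric]
  proof (rule nn_integral_le_of_superlevel_le)
    show "sigma_finite_measure Pa" "sigma_finite_measure Pb"
      using Pa(1) Pb(1) by (simp_all add: prob_space_imp_sigma_finite)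
    show "sets Pa = sets Pb"
      using Pa(2) Pb(2) by simp
    show "(\<lambda>x. G (restrict x (UNIV - {i}))) \<in> borel_measurable Pa"
      by measurable
    show "0 \<le> G (restrict x (UNIV - {i})) \<and> G (restrict x (UNIV - {i})) \<le> 1" if "x \<in> space Pa" for x
      using G_01 measurable_space[OF restrict_meas that] .
    fix t :: real
    define Bt where "Bt = {y \<in> space R. t < G y}"
    have "Bt \<in> sets R"
      unfolding Bt_def by measurable
    then have "measure Pa {x \<in> space Pa. restrict x (UNIV - {i}) \<in> Bt}
        \<le> exp eps * measure Pb {x \<in> space Pb. restrict x (UNIV - {i}) \<in> Bt} + delta"
      using jdp[unfolded jdp_def, rule_format, where i=i and a=a and b=b and s=s and B=Bt] S
      unfolding Pa_def Pb_def R_def by simp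
    moreover have level_set:
      "{x \<in> space P. t < G (restrict x (UNIV - {i}))} = {x \<in> space P. restrict x (UNIV - {i}) \<in> Bt}"
      if "sets P = sets Pa" for P :: "('i \<Rightarrow> 'x) measure"
      using measurable_space[OF restrict_meas] sets_eq_imp_space_eq[OF that] unfolding Bt_def by auto
    ultimately show "emeasure Pa {x \<in> space Pa. t < G (restrict x (UNIV - {i}))}
        \<le> exp eps * emeasure Pb {x \<in> space Pb. t < G (restrict x (UNIV - {i}))} + delta"
      using Pa Pb delta level_set[OF refl] level_set[of Pb]
      by (simp add: prob_space_emeasure_eq_measure ennreal_mult'[symmetric] ennreal_plus[symmetric]
          del: ennreal_plus)
  qed
qed

lemma jdp_nn_integral_fun_upd_le:
  fixes M :: "('i \<Rightarrow> 's) \<Rightarrow> ('i \<Rightarrow> 'x) measure" and F :: "('i \<Rightarrow> 'x) \<Rightarrow> real"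
  assumes jdp: "jdp S X eps delta M"
    and S: "a \<in> S" "b \<in> S" "\<And>j. s j \<in> S"
    and Ma: "M (s(i := a)) \<in> space (prob_algebra (PiM UNIV (\<lambda>_. X)))"
    and Mb: "M (s(i := b)) \<in> space (prob_algebra (PiM UNIV (\<lambda>_. X)))"
    and F: "F \<in> borel_measurable (PiM UNIV (\<lambda>_. X))"
    and F_01: "\<And>x. x \<in> space (PiM UNIV (\<lambda>_. X)) \<Longrightarrow> 0 \<le> F x \<and> F x \<le> 1"
    and c: "c \<in> space X"
  shows "(\<integral>\<^sup>+x. F (x(i := c)) \<partial>M (s(i := a)))
    \<le> exp eps * (\<integral>\<^sup>+x. F (x(i := c)) \<partial>M (s(i := b))) + delta"
proof -
  have upd: "(\<lambda>y. y(i := c)) \<in> PiM (UNIV - {i}) (\<lambda>_. X) \<rightarrow>\<^sub>M PiM UNIV (\<lambda>_. X)"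
    using c by (intro measurable_fun_upd[where J="UNIV - {i}"]) auto
  have "(restrict x (UNIV - {i}))(i := c) = x(i := c)" for x :: "'i \<Rightarrow> 'x"
    by (simp add: fun_eq_iff)
  moreover have "(\<integral>\<^sup>+x. F ((restrict x (UNIV - {i}))(i := c)) \<partial>M (s(i := a)))
    \<le> exp eps * (\<integral>\<^sup>+x. F ((restrict x (UNIV - {i}))(i := c)) \<partial>M (s(i := b))) + delta"
    using measurable_compose[OF upd F] F_01[OF measurable_space[OF upd]]
    by (rule jdp_nn_integral_restrict_le[OF jdp S Ma Mb])
  ultimately show ?thesis
    by simp
qed

lemma dp_truncated_update_bounds:
  assumes dp: "dp D Out eps 0 M" and B: "B \<in> sets Out"
    and d: "\<And>j. d j \<in> D" and c: "c \<in> D" and prob: "prob_space (M d)"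
  shows "measure (M d) B \<le> min 1 (exp eps * measure (M (d(i := c))) B)"
    and "min 1 (exp eps * measure (M (d(i := c))) B) \<le> exp (2 * eps) * measure (M d) B"
proof -
  have le: "measure (M d) B \<le> exp eps * measure (M (d(i := c))) B"
    "measure (M (d(i := c))) B \<le> exp eps * measure (M d) B"
    using dp[unfolded dp_def, rule_format, where i=i and a="d i" and b=c and d=d and B=B]
      dp[unfolded dp_def, rule_format, where i=i and a=c and b="d i" and d=d and B=B] B d c
    by simp_all
  show "measure (M d) B \<le> min 1 (exp eps * measure (M (d(i := c))) B)"
    using le(1) prob_space.prob_le_1[OF prob] by simp
  have "min 1 (exp eps * measure (M (d(i := c))) B) \<le> exp eps * (exp eps * measure (M d) B)"
    using le(2) by (simp add: min.coboundedI2)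
  also have "\<dots> = exp (2 * eps) * measure (M d) B"
    by (simp add: exp_double power2_eq_square mult.assoc)
  finally show "min 1 (exp eps * measure (M (d(i := c))) B) \<le> exp (2 * eps) * measure (M d) B" .
qed

lemma measure_bind_le_of_sandwich:
  fixes g :: "'a \<Rightarrow> real"
  assumes Pa: "Pa \<in> space (prob_algebra N)" and Pb: "Pb \<in> space (prob_algebra N)"
    and K: "K \<in> N \<rightarrow>\<^sub>M prob_algebra Out" and B: "B \<in> sets Out"
    and lower: "\<And>x. x \<in> space N \<Longrightarrow> measure (K x) B \<le> g x"
    and upper: "\<And>x. x \<in> space N \<Longrightarrow> g x \<le> C * measure (K x) B"
    and compare: "(\<integral>\<^sup>+x. g x \<partial>Pa) \<le> e * (\<integral>\<^sup>+x. g x \<partial>Pb) + \<delta>"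
    and nonneg: "0 \<le> C" "0 \<le> e" "0 \<le> \<delta>"
  shows "measure (Pa \<bind> K) B \<le> e * C * measure (Pb \<bind> K) B + \<delta>"
proof -
  have sets_Pa: "sets Pa = sets N" and sets_Pb: "sets Pb = sets N"
    using Pa Pb unfolding space_prob_algebra by auto
  have space_Pa: "space Pa = space N" and space_Pb: "space Pb = space N"
    using sets_eq_imp_space_eq[OF sets_Pa] sets_eq_imp_space_eq[OF sets_Pb] .
  have K_prob: "prob_space (K x)" if "x \<in> space N" for x
    using measurable_space[OF K that] unfolding space_prob_algebra by simp
  have K_meas: "(\<lambda>x. measure (K x) B) \<in> borel_measurable Pb"
    using measurable_compose[OF K measurable_measure_prob_algebra[OF B]]
    unfolding measurable_cong_sets[OF sets_Pb refl] .
  have bind_eq: "emeasure (P \<bind> K) B = (\<integral>\<^sup>+x. ennreal (measure (K x) B) \<partial>P)"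
    and bind_measure: "emeasure (P \<bind> K) B = ennreal (measure (P \<bind> K) B)"
    if P: "P \<in> space (prob_algebra N)" for P
  proof -
    have "space P = space N"
      using P sets_eq_imp_space_eq unfolding space_prob_algebra by blast
    then show "emeasure (P \<bind> K) B = (\<integral>\<^sup>+x. ennreal (measure (K x) B) \<partial>P)"
      unfolding emeasure_bind_prob_algebra[OF P K B] using K_prob
      by (intro nn_integral_cong) (simp add: prob_space_emeasure_eq_measure)
    show "emeasure (P \<bind> K) B = ennreal (measure (P \<bind> K) B)"
      using prob_space_bind'[OF P K] by (rule prob_space_emeasure_eq_measure)
  qed
  have "ennreal (measure (Pa \<bind> K) B) \<le> (\<integral>\<^sup>+x. g x \<partial>Pa)"
    unfolding bind_measure[OF Pa, symmetric] bind_eq[OF Pa]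
    using lower space_Pa by (intro nn_integral_mono) (simp add: ennreal_leI)
  also have "\<dots> \<le> e * (\<integral>\<^sup>+x. g x \<partial>Pb) + \<delta>"
    by (fact compare)
  also have "\<dots> \<le> e * (C * ennreal (measure (Pb \<bind> K) B)) + \<delta>"
  proof (intro add_right_mono mult_left_mono)
    have "(\<integral>\<^sup>+x. g x \<partial>Pb) \<le> (\<integral>\<^sup>+x. C * ennreal (measure (K x) B) \<partial>Pb)"
      using upper space_Pb nonneg(1) by (intro nn_integral_mono) (simp add: ennreal_mult[symmetric] ennreal_leI)
    also have "\<dots> = C * ennreal (measure (Pb \<bind> K) B)"
      using K_meas by (simp add: nn_integral_cmult bind_eq[OF Pb, symmetric] bind_measure[OF Pb])
    finally show "(\<integral>\<^sup>+x. g x \<partial>Pb) \<le> C * ennreal (measure (Pb \<bind> K) B)" .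
  qed simp
  also have "\<dots> = ennreal (e * C * measure (Pb \<bind> K) B + \<delta>)"
    using nonneg by (simp add: ennreal_mult ennreal_plus mult.assoc)
  finally show ?thesis
    using nonneg by (subst (asm) ennreal_le_iff) auto
qed

theorem lemma3p2:
  fixes MJ :: "('i::finite \<Rightarrow> 's) \<Rightarrow> ('i \<Rightarrow> 'x) measure"
    and MD :: "('i \<Rightarrow> 'x) \<Rightarrow> 'o measure"
    and X :: "'x measure" and Out :: "'o measure"
    and epsJ epsD delta :: real
  assumes MJ_prob: "\<And>s. MJ s \<in> space (prob_algebra (PiM UNIV (\<lambda>_::'i. X)))"
    and MD_kernel: "MD \<in> measurable (PiM UNIV (\<lambda>_::'i. X)) (prob_algebra Out)"
    and MJ_jdp: "jdp (UNIV :: 's set) X epsJ delta MJ"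
    and MD_dp: "dp (space X) Out epsD 0 MD"
  shows "dp (UNIV :: 's set) Out (2 * epsD + epsJ) delta (\<lambda>s. MJ s \<bind> MD)"
  unfolding dp_def
proof (intro allI impI ballI)
  fix i :: 'i and a b :: 's and s :: "'i \<Rightarrow> 's" and B
  assume B: "B \<in> sets Out"
  let ?X = "PiM UNIV (\<lambda>_::'i. X)"
  obtain c where c: "c \<in> space X"
    using prob_space.not_empty[of "MJ s"] sets_eq_imp_space_eq[of "MJ s" ?X] MJ_prob[of s]
    by (auto simp: space_prob_algebra space_PiM)
  have X_points: "x j \<in> space X" if "x \<in> space ?X" for x j
    using that by (auto simp: space_PiM)
  \<comment> \<open>The truncation at 1 is what lets the additive delta survive integration over t \<in> [0, 1).\<close>
  define F where "F x = min 1 (exp epsD * measure (MD x) B)" for x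
  have "F \<in> borel_measurable ?X"
    unfolding F_def using measurable_compose[OF MD_kernel measurable_measure_prob_algebra[OF B]]
    by measurable
  then have compare: "(\<integral>\<^sup>+x. F (x(i := c)) \<partial>MJ (s(i := a)))
      \<le> exp epsJ * (\<integral>\<^sup>+x. F (x(i := c)) \<partial>MJ (s(i := b))) + delta"
    by (rule jdp_nn_integral_fun_upd_le[OF MJ_jdp UNIV_I UNIV_I UNIV_I MJ_prob MJ_prob _ _ c]) (simp_all add: F_def)
  have "measure (MJ (s(i := a)) \<bind> MD) B
      \<le> exp epsJ * exp (2 * epsD) * measure (MJ (s(i := b)) \<bind> MD) B + delta"
  proof (rule measure_bind_le_of_sandwich[OF MJ_prob MJ_prob MD_kernel B _ _ compare])
    fix x assume x: "x \<in> space ?X"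
    have "prob_space (MD x)"
      using measurable_space[OF MD_kernel x] by (simp add: space_prob_algebra)
    note bounds = dp_truncated_update_bounds[where d=x and i=i, OF MD_dp B X_points[OF x] c this]
    show "measure (MD x) B \<le> F (x(i := c))"
      unfolding F_def by (fact bounds(1))
    show "F (x(i := c)) \<le> exp (2 * epsD) * measure (MD x) B"
      unfolding F_def by (fact bounds(2))
  qed (simp_all add: jdp_delta_nonneg[OF MJ_jdp])
  also have "exp epsJ * exp (2 * epsD) = exp (2 * epsD + epsJ)"
    by (simp add: mult_exp_exp)
  finally show "measure (MJ (s(i := a)) \<bind> MD) B
      \<le> exp (2 * epsD + epsJ) * measure (MJ (s(i := b)) \<bind> MD) B + delta" .
qed

end
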